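(* Let $a\in\mathbb{R}$ and let $(c(t))_{t\in\mathbb{R}}$ be a discontinuous bounded complex-valued cosine function (i.e. $c(0)=1$, $c(s+t)+c(s-t)=2c(s)c(t)$ for all $s,t\in\mathbb{R}$, $c$ bounded). Then $$\sup_{t\in\mathbb{R}}|\cos(at)-c(t)|=\limsup_{t\to0}|\cos(at)-c(t)|=2.$$ *)

theory Defs
  imports "HOL-Analysis.Analysis"
begin

definition cosine_function :: "(real \<Rightarrow> complex) \<Rightarrow> bool" where
  "cosine_function c \<longleftrightarrow> c 0 = 1 \<and> (\<forall>s t. c (s + t) + c (s - t) = 2 * c s * c t)"

end

theory Submission
  imports Defs
begin

text \<open>A bounded complex cosine function is real-valued with values in \<open>[-1, 1]\<close>.
  For such an \<open>r\<close> let \<open>L\<close> be the set of cluster values of \<open>r\<close> at \<open>0\<close> and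
  \<open>A = cos\<^sup>-\<^sup>1 L\<close> the set of corresponding angles. The functional equation makes \<open>A\<close> a
  closed additive subgroup of the reals containing \<open>2\<pi>\<close>: the numbers \<open>r (s \<plusminus> t)\<close> are the
  two roots of \<open>X\<^sup>2 - 2 r(s) r(t) X + r(s)\<^sup>2 + r(t)\<^sup>2 - 1\<close>, just as \<open>cos (\<phi> \<plusminus> \<psi>)\<close> are the roots
  of \<open>X\<^sup>2 - 2 cos \<phi> cos \<psi> X + cos\<^sup>2 \<phi> + cos\<^sup>2 \<psi> - 1\<close>. It is moreover divisible, because
  \<open>r (n s) = cos (n \<theta>)\<close> whenever \<open>r s = cos \<theta>\<close>. A discontinuous \<open>r\<close> is discontinuous at \<open>0\<close>,
  so \<open>A\<close> contains an angle that is not a multiple of \<open>2\<pi>\<close>; together with divisibility this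
  rules out that \<open>A\<close> is cyclic, so \<open>A\<close> is all of \<open>\<real>\<close> and \<open>-1 = cos \<pi>\<close> is a cluster value.
  Along \<open>t \<rightarrow> 0\<close> with \<open>r t \<rightarrow> -1\<close> the distance \<open>\<bar>cos (a t) - r t\<bar>\<close> tends to its largest
  possible value \<open>2\<close>.\<close>

lemma floor_divide_mult_bounds:
  fixes x y :: real
  assumes "x > 0"
  shows "of_int \<lfloor>y / x\<rfloor> * x \<le> y" "y < of_int \<lfloor>y / x\<rfloor> * x + x"
proof -
  have "of_int \<lfloor>y / x\<rfloor> \<le> y / x" "y / x < of_int \<lfloor>y / x\<rfloor> + 1"
    by linarith+
  then show "of_int \<lfloor>y / x\<rfloor> * x \<le> y" "y < of_int \<lfloor>y / x\<rfloor> * x + x"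
    unfolding pos_le_divide_eq[OF assms] pos_divide_less_eq[OF assms] by (simp_all add: distrib_right)
qed

lemma real_subgroup_int_multiples:
  fixes G :: "real set"
  assumes "0 \<in> G" "\<And>x y. x \<in> G \<Longrightarrow> y \<in> G \<Longrightarrow> x + y \<in> G" "\<And>x. x \<in> G \<Longrightarrow> - x \<in> G"
    and "x \<in> G"
  shows "of_int k * x \<in> G"
proof -
  have nat: "real n * x \<in> G" for n
    by (induction n) (use assms in \<open>simp_all add: distrib_right\<close>)
  show ?thesis
  proof (cases "k \<ge> 0")
    case True
    then show ?thesis using nat[of "nat k"] by simp
  next
    case False
    then show ?thesis using assms(3)[OF nat[of "nat (- k)"]] by simp
  qed
qed

lemma closed_real_subgroup_small_elements:
  fixes G :: "real set"
  assumes "closed G" "0 \<in> G" "\<And>x y. x \<in> G \<Longrightarrow> y \<in> G \<Longrightarrow> x + y \<in> G"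
    and "\<And>x. x \<in> G \<Longrightarrow> - x \<in> G"
    and small: "\<And>e. e > 0 \<Longrightarrow> \<exists>x\<in>G. 0 < x \<and> x < e"
  shows "G = UNIV"
proof -
  have "y \<in> closure G" for y
    unfolding closure_approachable
  proof (intro allI impI)
    fix e :: real
    assume "e > 0"
    then obtain x where x: "x \<in> G" "0 < x" "x < e"
      using small by blast
    define k where "k = \<lfloor>y / x\<rfloor>"
    have "of_int k * x \<le> y" "y < of_int k * x + x"
      using floor_divide_mult_bounds[OF x(2)] unfolding k_def by simp_all
    then have "dist (of_int k * x) y < e"
      using x(3) by (simp add: dist_real_def)
    then show "\<exists>z\<in>G. dist z y < e"
      using real_subgroup_int_multiples[OF assms(2-4) x(1)] by blast
  qed
  then show ?thesis
    using closure_closed[OF assms(1)] by auto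
qed

lemma closed_real_subgroup_cyclic:
  fixes G :: "real set"
  assumes "closed G" "0 \<in> G" "\<And>x y. x \<in> G \<Longrightarrow> y \<in> G \<Longrightarrow> x + y \<in> G"
    and "\<And>x. x \<in> G \<Longrightarrow> - x \<in> G"
    and "x0 \<in> G" "x0 > 0"
    and gap: "e > 0" "\<And>x. x \<in> G \<Longrightarrow> 0 < x \<Longrightarrow> e \<le> x"
  obtains \<gamma> where "\<gamma> > 0" "G = range (\<lambda>k::int. of_int k * \<gamma>)"
proof -
  define S where "S = {x\<in>G. 0 < x}"
  have "S \<noteq> {}" "bdd_below S"
    using assms(5,6) unfolding S_def by (auto intro: bdd_belowI[of _ 0])
  define \<gamma> where "\<gamma> = Inf S"
  have "e \<le> \<gamma>"
    unfolding \<gamma>_def using gap(2) \<open>S \<noteq> {}\<close> by (auto simp: S_def intro: cInf_greatest)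
  then have "\<gamma> > 0"
    using gap(1) by linarith
  have "\<gamma> \<in> closure S"
    unfolding \<gamma>_def using \<open>S \<noteq> {}\<close> \<open>bdd_below S\<close> by (rule closure_contains_Inf)
  then have "\<gamma> \<in> G"
    using closure_mono[of S G] closure_closed[OF assms(1)] by (auto simp: S_def)
  have "x = of_int \<lfloor>x / \<gamma>\<rfloor> * \<gamma>" if "x \<in> G" for x
  proof -
    define m where "m = \<lfloor>x / \<gamma>\<rfloor>"
    have "x - of_int m * \<gamma> \<in> G"
      using assms(3)[OF that assms(4)[OF real_subgroup_int_multiples[OF assms(2-4) \<open>\<gamma> \<in> G\<close>]]]
      by simp
    moreover have "of_int m * \<gamma> \<le> x" "x < of_int m * \<gamma> + \<gamma>"
      using floor_divide_mult_bounds[OF \<open>\<gamma> > 0\<close>] unfolding m_def by simp_all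
    moreover have "\<gamma> \<le> y" if "y \<in> S" for y
      unfolding \<gamma>_def using that \<open>bdd_below S\<close> by (rule cInf_lower)
    ultimately show ?thesis
      unfolding S_def m_def by force
  qed
  then have "G = range (\<lambda>k::int. of_int k * \<gamma>)"
    using real_subgroup_int_multiples[OF assms(2-4) \<open>\<gamma> \<in> G\<close>] by blast
  with \<open>\<gamma> > 0\<close> that show ?thesis
    by blast
qed

lemma cos_add_cos_diff_quadratic:
  "(x - cos (\<phi> + \<psi>)) * (x - cos (\<phi> - \<psi>))
     = x\<^sup>2 - 2 * cos \<phi> * cos \<psi> * x + ((cos \<phi>)\<^sup>2 + (cos \<psi>)\<^sup>2 - 1)"
  for x \<phi> \<psi> :: real
proof -
  have sum: "cos (\<phi> + \<psi>) + cos (\<phi> - \<psi>) = 2 * cos \<phi> * cos \<psi>"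
    unfolding cos_add cos_diff by simp
  have "cos (\<phi> + \<psi>) * cos (\<phi> - \<psi>) = (cos \<phi> * cos \<psi>)\<^sup>2 - (sin \<phi> * sin \<psi>)\<^sup>2"
    unfolding cos_add cos_diff by (simp add: power2_eq_square algebra_simps)
  also have "\<dots> = (cos \<phi>)\<^sup>2 + (cos \<psi>)\<^sup>2 - 1"
    by (simp add: power_mult_distrib sin_squared_eq algebra_simps)
  finally have product: "cos (\<phi> + \<psi>) * cos (\<phi> - \<psi>) = (cos \<phi>)\<^sup>2 + (cos \<psi>)\<^sup>2 - 1" .
  have "(x - cos (\<phi> + \<psi>)) * (x - cos (\<phi> - \<psi>))
      = x\<^sup>2 - (cos (\<phi> + \<psi>) + cos (\<phi> - \<psi>)) * x + cos (\<phi> + \<psi>) * cos (\<phi> - \<psi>)"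
    by (simp add: power2_eq_square algebra_simps)
  then show ?thesis
    unfolding sum product .
qed

lemma SUP_Limsup_eq_attained_bound:
  fixes f :: "'a \<Rightarrow> real"
  assumes "\<And>x. f x \<le> M" "filterlim t F sequentially" "(\<lambda>j. f (t j)) \<longlonglongrightarrow> M"
  shows "(SUP x. f x) = M" "Limsup F (\<lambda>x. ereal (f x)) = M"
proof -
  have "bdd_above (range f)"
    using assms(1) by (auto intro: bdd_aboveI[of _ M])
  then show "(SUP x. f x) = M"
    using assms by (intro antisym cSUP_least LIMSEQ_le_const2[OF assms(3)]) (auto intro: cSUP_upper)
  have "ereal M = Limsup sequentially (\<lambda>j. ereal (f (t j)))"
    using assms(3) by (intro lim_imp_Limsup[symmetric]) auto
  also have "\<dots> \<le> Limsup (filtermap t sequentially) (\<lambda>x. ereal (f x))"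
    by (rule Limsup_filtermap_ge)
  also have "\<dots> \<le> Limsup F (\<lambda>x. ereal (f x))"
    using assms(2) unfolding Limsup_def filterlim_def
    by (intro INF_superset_mono) (auto simp: le_filter_def)
  finally show "Limsup F (\<lambda>x. ereal (f x)) = M"
    using assms(1) by (intro antisym Limsup_bounded) auto
qed

lemma cosine_function_double:
  assumes "cosine_function c"
  shows "c (2 * x) = 2 * (c x)\<^sup>2 - 1"
proof -
  have "c (x + x) + c (x - x) = 2 * c x * c x" "c 0 = 1"
    using assms unfolding cosine_function_def by blast+
  moreover have "x + x = 2 * x" by simp
  ultimately have "c (2 * x) + 1 = 2 * c x * c x"
    by simp
  then show ?thesis
    by (simp add: power2_eq_square eq_diff_eq mult.assoc)
qed

lemma joukowski_preimage:
  fixes w :: complex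
  obtains z where "z \<noteq> 0" "1 \<le> cmod z" "w = (z + inverse z) / 2"
proof -
  define z where "z = w + csqrt (w\<^sup>2 - 1)"
  have "z * (2 * w - z) = w\<^sup>2 - (csqrt (w\<^sup>2 - 1))\<^sup>2"
    unfolding z_def by algebra
  then have z_inv: "z * (2 * w - z) = 1"
    by simp
  then have "z \<noteq> 0"
    by auto
  then have "inverse z = 2 * w - z"
    using z_inv by (simp add: field_simps)
  then have w: "w = (z + inverse z) / 2"
    by simp
  show ?thesis
  proof (cases "1 \<le> cmod z")
    case True
    then show ?thesis using that \<open>z \<noteq> 0\<close> w by blast
  next
    case False
    then have "1 \<le> cmod (inverse z)"
      using \<open>z \<noteq> 0\<close> by (simp add: norm_inverse one_le_inverse_iff)
    then show ?thesis
      using that[of "inverse z"] \<open>z \<noteq> 0\<close> w by (simp add: add.commute)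
  qed
qed

lemma cosine_function_pow2:
  assumes "cosine_function c" "z \<noteq> 0" "c t = (z + inverse z) / 2"
  shows "c (2 ^ k * t) = (z ^ 2 ^ k + inverse z ^ 2 ^ k) / 2"
proof (induction k)
  case 0
  then show ?case using assms(3) by simp
next
  case (Suc k)
  define Z where "Z = z ^ 2 ^ k"
  define Y where "Y = inverse z ^ 2 ^ k"
  have "Z * Y = 1"
    unfolding Z_def Y_def using assms(2) by (simp flip: power_mult_distrib)
  have "c (2 ^ Suc k * t) = c (2 * (2 ^ k * t))"
    by (simp add: algebra_simps)
  also have "\<dots> = 2 * ((Z + Y) / 2)\<^sup>2 - 1"
    by (simp only: cosine_function_double[OF assms(1)] Suc.IH Z_def Y_def)
  also have "\<dots> = (Z\<^sup>2 + Y\<^sup>2) / 2 + (Z * Y - 1)"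
    by (simp add: power2_eq_square field_simps)
  also have "\<dots> = (z ^ 2 ^ Suc k + inverse z ^ 2 ^ Suc k) / 2"
    using \<open>Z * Y = 1\<close> by (simp add: Z_def Y_def power_mult[symmetric] mult.commute)
  finally show ?case .
qed

text \<open>Writing \<open>c t = (z + 1/z)/2\<close> with \<open>\<bar>z\<bar> \<ge> 1\<close>, the values \<open>c (2\<^sup>k t)\<close> grow like
  \<open>\<bar>z\<bar>\<^bsup>2\<^sup>k\<^esup>/2\<close> unless \<open>\<bar>z\<bar> = 1\<close>, in which case \<open>c t = Re z\<close>.\<close>
lemma bounded_cosine_function_real:
  assumes "cosine_function c" "bounded (range c)"
  shows "c t = complex_of_real (Re (c t))" "\<bar>Re (c t)\<bar> \<le> 1"
proof -
  obtain B where B: "\<And>x. cmod (c x) \<le> B"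
    using assms(2) by (auto simp: bounded_iff)
  obtain z where z: "z \<noteq> 0" "1 \<le> cmod z" "c t = (z + inverse z) / 2"
    using joukowski_preimage by metis
  have "cmod z = 1"
  proof (rule ccontr)
    assume "cmod z \<noteq> 1"
    then have "cmod z > 1"
      using z(2) by simp
    then obtain k where k: "2 * B + 1 < cmod z ^ k"
      using real_arch_pow by blast
    have "cmod z ^ k \<le> cmod z ^ 2 ^ k"
      using \<open>cmod z > 1\<close> by (intro power_increasing) (auto intro: less_imp_le[OF less_exp])
    have "cmod (inverse z ^ 2 ^ k) = inverse (cmod z) ^ 2 ^ k"
      by (simp add: norm_power norm_inverse)
    also have "\<dots> \<le> 1"
      using \<open>cmod z > 1\<close> by (intro power_le_one) (auto simp: inverse_le_1_iff)
    finally have "cmod (inverse z ^ 2 ^ k) \<le> 1" .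
    moreover have "cmod (z ^ 2 ^ k) - cmod (inverse z ^ 2 ^ k) \<le> cmod (z ^ 2 ^ k + inverse z ^ 2 ^ k)"
      by (metis norm_diff_ineq norm_minus_cancel diff_minus_eq_add)
    moreover have "cmod (z ^ 2 ^ k + inverse z ^ 2 ^ k) = 2 * cmod (c (2 ^ k * t))"
      by (simp add: cosine_function_pow2[OF assms(1) z(1,3)] norm_divide)
    ultimately have "cmod z ^ 2 ^ k \<le> 2 * B + 1"
      using B[of "2 ^ k * t"] by (simp add: norm_power)
    with k \<open>cmod z ^ k \<le> cmod z ^ 2 ^ k\<close> show False
      by linarith
  qed
  then have "inverse z = cnj z"
    using complex_div_cnj[of 1 z] by (simp add: divide_inverse)
  then have "c t = complex_of_real (Re z)"
    using z(3) complex_add_cnj[of z] by simp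
  moreover have "\<bar>Re z\<bar> \<le> 1"
    using abs_Re_le_cmod[of z] \<open>cmod z = 1\<close> by simp
  ultimately show "c t = complex_of_real (Re (c t))" "\<bar>Re (c t)\<bar> \<le> 1"
    by simp_all
qed

locale bounded_real_cosine =
  fixes r :: "real \<Rightarrow> real"
  assumes zero [simp]: "r 0 = 1"
    and dalembert: "r (s + t) + r (s - t) = 2 * r s * r t"
    and bounded: "\<bar>r t\<bar> \<le> 1"
begin

lemma double: "r (2 * x) = 2 * (r x)\<^sup>2 - 1"
proof -
  have "r (x + x) + r (x - x) = 2 * r x * r x"
    by (rule dalembert)
  moreover have "x + x = 2 * x"
    by simp
  ultimately show ?thesis
    by (simp add: power2_eq_square)
qed

lemma product: "r (s + t) * r (s - t) = (r s)\<^sup>2 + (r t)\<^sup>2 - 1"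
proof -
  have "r ((s + t) + (s - t)) + r ((s + t) - (s - t)) = 2 * r (s + t) * r (s - t)"
    by (rule dalembert)
  moreover have "(s + t) + (s - t) = 2 * s" "(s + t) - (s - t) = 2 * t"
    by simp_all
  ultimately show ?thesis
    using double[of s] double[of t] by simp
qed

lemma chebyshev:
  assumes "r s = cos \<theta>"
  shows "r (real n * s) = cos (real n * \<theta>)"
proof -
  have "r (real n * s) = cos (real n * \<theta>) \<and> r (real (Suc n) * s) = cos (real (Suc n) * \<theta>)"
  proof (induction n)
    case 0
    then show ?case using assms by simp
  next
    case (Suc n)
    have "r (real (Suc (Suc n)) * s) = 2 * r (real (Suc n) * s) * r s - r (real n * s)"
      using dalembert[of "real (Suc n) * s" s] by (simp add: algebra_simps)
    also have "\<dots> = 2 * cos (real (Suc n) * \<theta>) * cos \<theta> - cos (real n * \<theta>)"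
      using Suc assms by simp
    also have "\<dots> = cos (real (Suc (Suc n)) * \<theta>)"
      using cos_add[of "real (Suc n) * \<theta>" \<theta>] cos_diff[of "real (Suc n) * \<theta>" \<theta>]
      by (simp add: algebra_simps)
    finally show ?case using Suc by simp
  qed
  then show ?thesis by simp
qed

text \<open>The point \<open>0\<close> itself is not excluded, so \<open>r 0 = 1\<close> is always a cluster value.\<close>
definition cluster_values :: "real set" where
  "cluster_values = (\<Inter>d\<in>{0<..}. closure (r ` ball 0 d))"

definition cluster_angles :: "real set" where
  "cluster_angles = cos -` cluster_values"

lemma cluster_valuesI:
  assumes "t \<longlonglongrightarrow> 0" "(\<lambda>j. r (t j)) \<longlonglongrightarrow> y"
  shows "y \<in> cluster_values"
  unfolding cluster_values_def
proof (intro INT_I)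
  fix d :: real
  assume "d \<in> {0<..}"
  then have "eventually (\<lambda>j. t j \<in> ball 0 d) sequentially"
    using assms(1) by (auto simp: tendsto_iff dist_commute)
  then have "eventually (\<lambda>j. r (t j) \<in> closure (r ` ball 0 d)) sequentially"
    by eventually_elim (auto intro: closure_subset[THEN subsetD])
  then show "y \<in> closure (r ` ball 0 d)"
    using assms(2) by (intro Lim_in_closed_set) auto
qed

lemma cluster_valuesE:
  assumes "y \<in> cluster_values"
  obtains t where "t \<longlonglongrightarrow> 0" "(\<lambda>j. r (t j)) \<longlonglongrightarrow> y"
proof -
  have "\<forall>j. \<exists>t\<in>ball 0 (1 / Suc j). dist (r t) y < 1 / Suc j"
  proof
    fix j
    have "y \<in> closure (r ` ball 0 (1 / Suc j))"
      using assms unfolding cluster_values_def by simp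
    then show "\<exists>t\<in>ball 0 (1 / Suc j). dist (r t) y < 1 / Suc j"
      unfolding closure_approachable by fastforce
  qed
  then obtain t where t: "\<And>j. \<bar>t j\<bar> < 1 / Suc j" "\<And>j. \<bar>r (t j) - y\<bar> < 1 / Suc j"
    by (metis mem_ball_0 real_norm_def dist_real_def)
  have "t \<longlonglongrightarrow> 0"
    by (rule LIMSEQ_norm_0) (use t in auto)
  moreover have "(\<lambda>j. r (t j) - y) \<longlonglongrightarrow> 0"
    by (rule LIMSEQ_norm_0) (use t in auto)
  then have "(\<lambda>j. r (t j)) \<longlonglongrightarrow> y"
    by (simp add: LIM_zero_iff)
  ultimately show ?thesis
    using that by blast
qed

lemma cluster_values_subset: "cluster_values \<subseteq> {-1..1}"
proof -
  have "closure (r ` ball 0 1) \<subseteq> {-1..1}"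
    using bounded by (intro closure_minimal) (auto simp: abs_le_iff)
  then show ?thesis
    unfolding cluster_values_def by (meson INT_lower greaterThan_iff order_trans zero_less_one)
qed

lemma cos_arccos_cluster_value: "y \<in> cluster_values \<Longrightarrow> cos (arccos y) = y"
  using cluster_values_subset by (auto intro: cos_arccos)

lemma closed_cluster_angles: "closed cluster_angles"
  unfolding cluster_angles_def cluster_values_def
  by (intro closed_vimage closed_INT continuous_intros) auto

lemma zero_cluster_angle: "0 \<in> cluster_angles"
  unfolding cluster_angles_def cluster_values_def
  by (auto intro!: closure_subset[THEN subsetD] image_eqI[of 1 r 0])

lemma uminus_cluster_angle: "\<phi> \<in> cluster_angles \<Longrightarrow> - \<phi> \<in> cluster_angles"
  by (simp add: cluster_angles_def)

lemma bounded_range_comp: "bounded (range (\<lambda>j. r (g j)))"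
  using bounded by (auto simp: bounded_iff intro!: exI[of _ 1])

lemma cos_add_cluster_value:
  assumes s: "s \<longlonglongrightarrow> 0" "(\<lambda>j. r (s j)) \<longlonglongrightarrow> cos \<phi>"
    and t: "t \<longlonglongrightarrow> 0" "(\<lambda>j. r (t j)) \<longlonglongrightarrow> cos \<psi>"
    and plus: "(\<lambda>j. r (s j + t j)) \<longlonglongrightarrow> x"
  shows "cos (\<phi> + \<psi>) \<in> cluster_values"
proof -
  have "(\<lambda>j. 2 * r (s j) * r (t j) - r (s j + t j)) \<longlonglongrightarrow> 2 * cos \<phi> * cos \<psi> - x"
    by (intro tendsto_intros s(2) t(2) plus)
  then have minus: "(\<lambda>j. r (s j - t j)) \<longlonglongrightarrow> 2 * cos \<phi> * cos \<psi> - x"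
    by (simp add: dalembert[symmetric])
  have "(\<lambda>j. r (s j + t j) * r (s j - t j)) \<longlonglongrightarrow> x * (2 * cos \<phi> * cos \<psi> - x)"
    by (intro tendsto_mult plus minus)
  moreover have "(\<lambda>j. r (s j + t j) * r (s j - t j)) \<longlonglongrightarrow> (cos \<phi>)\<^sup>2 + (cos \<psi>)\<^sup>2 - 1"
    unfolding product by (intro tendsto_intros s(2) t(2))
  ultimately have "x * (2 * cos \<phi> * cos \<psi> - x) = (cos \<phi>)\<^sup>2 + (cos \<psi>)\<^sup>2 - 1"
    by (rule LIMSEQ_unique)
  then have "(x - cos (\<phi> + \<psi>)) * (x - cos (\<phi> - \<psi>)) = 0"
    unfolding cos_add_cos_diff_quadratic by (simp add: power2_eq_square algebra_simps)
  then consider "x = cos (\<phi> + \<psi>)" | "2 * cos \<phi> * cos \<psi> - x = cos (\<phi> + \<psi>)"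
    by (force simp: cos_add cos_diff)
  then show ?thesis
  proof cases
    case 1
    moreover have "(\<lambda>j. s j + t j) \<longlonglongrightarrow> 0"
      using tendsto_add[OF s(1) t(1)] by simp
    ultimately show ?thesis
      using cluster_valuesI plus by simp
  next
    case 2
    moreover have "(\<lambda>j. s j - t j) \<longlonglongrightarrow> 0"
      using tendsto_diff[OF s(1) t(1)] by simp
    ultimately show ?thesis
      using cluster_valuesI minus by simp
  qed
qed

lemma cluster_angles_add:
  assumes "\<phi> \<in> cluster_angles" "\<psi> \<in> cluster_angles"
  shows "\<phi> + \<psi> \<in> cluster_angles"
proof -
  obtain s where s: "s \<longlonglongrightarrow> 0" "(\<lambda>j. r (s j)) \<longlonglongrightarrow> cos \<phi>"
    using assms(1) cluster_valuesE unfolding cluster_angles_def by blast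
  obtain t where t: "t \<longlonglongrightarrow> 0" "(\<lambda>j. r (t j)) \<longlonglongrightarrow> cos \<psi>"
    using assms(2) cluster_valuesE unfolding cluster_angles_def by blast
  obtain x \<sigma> where \<sigma>: "strict_mono \<sigma>" "((\<lambda>j. r (s j + t j)) \<circ> \<sigma>) \<longlonglongrightarrow> x"
    using bounded_imp_convergent_subsequence[OF bounded_range_comp[of "\<lambda>j. s j + t j"]] by blast
  have "cos (\<phi> + \<psi>) \<in> cluster_values"
  proof (rule cos_add_cluster_value)
    show "(s \<circ> \<sigma>) \<longlonglongrightarrow> 0" "(t \<circ> \<sigma>) \<longlonglongrightarrow> 0"
      using LIMSEQ_subseq_LIMSEQ[OF s(1) \<sigma>(1)] LIMSEQ_subseq_LIMSEQ[OF t(1) \<sigma>(1)] .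
    show "(\<lambda>j. r ((s \<circ> \<sigma>) j)) \<longlonglongrightarrow> cos \<phi>" "(\<lambda>j. r ((t \<circ> \<sigma>) j)) \<longlonglongrightarrow> cos \<psi>"
      using LIMSEQ_subseq_LIMSEQ[OF s(2) \<sigma>(1)] LIMSEQ_subseq_LIMSEQ[OF t(2) \<sigma>(1)]
      by (simp_all add: o_def)
    show "(\<lambda>j. r ((s \<circ> \<sigma>) j + (t \<circ> \<sigma>) j)) \<longlonglongrightarrow> x"
      using \<sigma>(2) by (simp add: o_def)
  qed
  then show ?thesis
    by (simp add: cluster_angles_def)
qed

lemma cluster_angles_divide:
  assumes "\<phi> \<in> cluster_angles" "n \<ge> 1"
  obtains \<psi> where "\<psi> \<in> cluster_angles" "cos (real n * \<psi>) = cos \<phi>"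
proof -
  obtain t where t: "t \<longlonglongrightarrow> 0" "(\<lambda>j. r (t j)) \<longlonglongrightarrow> cos \<phi>"
    using assms(1) cluster_valuesE unfolding cluster_angles_def by blast
  define \<theta> where "\<theta> j = arccos (r (t j / real n))" for j
  have cos_\<theta>: "cos (\<theta> j) = r (t j / real n)" for j
    unfolding \<theta>_def using bounded by (simp add: cos_arccos_abs)
  have "\<bar>\<theta> j\<bar> \<le> pi" for j
    unfolding \<theta>_def using bounded[of "t j / real n"] arccos_lbound arccos_ubound
    by (simp add: abs_le_iff)
  then have "bounded (range \<theta>)"
    by (intro boundedI[of _ pi]) auto
  then obtain \<psi> \<sigma> where \<sigma>: "strict_mono \<sigma>" "(\<theta> \<circ> \<sigma>) \<longlonglongrightarrow> \<psi>"
    using bounded_imp_convergent_subsequence by blast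
  have "(\<lambda>j. t (\<sigma> j) / real n) \<longlonglongrightarrow> 0"
    using tendsto_divide_zero[OF LIMSEQ_subseq_LIMSEQ[OF t(1) \<sigma>(1)]] by (simp add: o_def)
  moreover have "(\<lambda>j. r (t (\<sigma> j) / real n)) \<longlonglongrightarrow> cos \<psi>"
    using tendsto_cos[OF \<sigma>(2)] by (simp add: o_def cos_\<theta>)
  ultimately have "\<psi> \<in> cluster_angles"
    unfolding cluster_angles_def using cluster_valuesI by simp
  moreover have "cos (real n * \<psi>) = cos \<phi>"
  proof (rule LIMSEQ_unique)
    show "(\<lambda>j. cos (real n * \<theta> (\<sigma> j))) \<longlonglongrightarrow> cos (real n * \<psi>)"
      using \<sigma>(2) by (intro tendsto_intros) (simp add: o_def)
    have "cos (real n * \<theta> j) = r (t j)" for j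
      using chebyshev[OF cos_\<theta>[symmetric], of n] assms(2) by simp
    then show "(\<lambda>j. cos (real n * \<theta> (\<sigma> j))) \<longlonglongrightarrow> cos \<phi>"
      using LIMSEQ_subseq_LIMSEQ[OF t(2) \<sigma>(1)] by (simp add: o_def)
  qed
  ultimately show ?thesis
    using that by blast
qed

lemma cluster_angles_not_cyclic:
  assumes "\<alpha> \<in> cluster_angles" "cos \<alpha> \<noteq> 1" "\<gamma> > 0"
  shows "cluster_angles \<noteq> range (\<lambda>k::int. of_int k * \<gamma>)"
proof
  assume cyclic: "cluster_angles = range (\<lambda>k::int. of_int k * \<gamma>)"
  have "2 * pi \<in> cluster_angles"
    using zero_cluster_angle by (simp add: cluster_angles_def)
  then obtain N :: int where N: "2 * pi = of_int N * \<gamma>"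
    using cyclic by auto
  then have "N \<ge> 1"
    using \<open>\<gamma> > 0\<close> pi_gt_zero by (smt (verit) mult_nonpos_nonneg of_int_le_0_iff)
  have "\<gamma> \<in> cluster_angles"
    using cyclic by (auto intro: range_eqI[of _ _ 1])
  moreover have "nat N \<ge> 1"
    using \<open>N \<ge> 1\<close> by simp
  ultimately obtain \<psi> where \<psi>: "\<psi> \<in> cluster_angles" "cos (real (nat N) * \<psi>) = cos \<gamma>"
    by (rule cluster_angles_divide)
  obtain m :: int where "\<psi> = of_int m * \<gamma>"
    using \<psi>(1) cyclic by auto
  then have "real (nat N) * \<psi> = of_int m * (2 * pi)"
    using \<open>N \<ge> 1\<close> N by simp
  moreover have "cos (of_int m * (2 * pi)) = 1"
    by (metis cos_one_2pi_int mult.assoc)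
  ultimately have "cos \<gamma> = 1"
    using \<psi>(2) by simp
  then obtain n :: int where "\<gamma> = of_int n * 2 * pi"
    using cos_one_2pi_int by blast
  moreover obtain k :: int where "\<alpha> = of_int k * \<gamma>"
    using assms(1) cyclic by auto
  ultimately have "\<alpha> = of_int (k * n) * 2 * pi"
    by simp
  with assms(2) show False
    using cos_one_2pi_int by blast
qed

text \<open>A closed subgroup of the reals is either everything or cyclic.\<close>
lemma pi_cluster_angle:
  assumes "\<alpha> \<in> cluster_angles" "cos \<alpha> \<noteq> 1"
  shows "pi \<in> cluster_angles"
proof (cases "\<forall>e>0. \<exists>x\<in>cluster_angles. 0 < x \<and> x < e")
  case True
  then have "cluster_angles = UNIV"
    by (intro closed_real_subgroup_small_elements closed_cluster_angles zero_cluster_angle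
        cluster_angles_add uminus_cluster_angle) auto
  then show ?thesis
    by simp
next
  case False
  then obtain e where "e > 0" "\<And>x. x \<in> cluster_angles \<Longrightarrow> 0 < x \<Longrightarrow> e \<le> x"
    by (meson not_le)
  moreover have "2 * pi \<in> cluster_angles"
    using zero_cluster_angle by (simp add: cluster_angles_def)
  ultimately obtain \<gamma> where "\<gamma> > 0" "cluster_angles = range (\<lambda>k::int. of_int k * \<gamma>)"
    using closed_real_subgroup_cyclic[OF closed_cluster_angles zero_cluster_angle
        cluster_angles_add uminus_cluster_angle, of "2 * pi" e] by auto
  with cluster_angles_not_cyclic[OF assms] show ?thesis
    by blast
qed

text \<open>Both \<open>r (x + h) + r (x - h) = 2 r x r h\<close> and, by \<open>product\<close>,
  \<open>(r (x + h) - r (x - h))\<^sup>2 = 4 ((r x)\<^sup>2 - 1) ((r h)\<^sup>2 - 1)\<close> are controlled by \<open>r h\<close>.\<close>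
lemma isCont_if_tendsto_1:
  assumes "(r \<longlongrightarrow> 1) (at 0)"
  shows "isCont r x"
  unfolding isCont_iff
proof -
  define S where "S h = r (x + h) + r (x - h)" for h
  define D where "D h = r (x + h) - r (x - h)" for h
  have "((\<lambda>h. 2 * r x * r h) \<longlongrightarrow> 2 * r x * 1) (at 0)"
    by (intro tendsto_intros assms)
  then have S: "(S \<longlongrightarrow> 2 * r x) (at 0)"
    unfolding S_def dalembert by simp
  have "\<bar>D h\<bar> = sqrt (4 * ((r x)\<^sup>2 - 1) * ((r h)\<^sup>2 - 1))" for h
  proof -
    have "(D h)\<^sup>2 = (S h)\<^sup>2 - 4 * (r (x + h) * r (x - h))"
      unfolding D_def S_def by algebra
    also have "\<dots> = (2 * r x * r h)\<^sup>2 - 4 * ((r x)\<^sup>2 + (r h)\<^sup>2 - 1)"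
      unfolding S_def dalembert product ..
    also have "\<dots> = 4 * ((r x)\<^sup>2 - 1) * ((r h)\<^sup>2 - 1)"
      by algebra
    finally show ?thesis
      by (metis real_sqrt_abs)
  qed
  moreover have "((\<lambda>h. sqrt (4 * ((r x)\<^sup>2 - 1) * ((r h)\<^sup>2 - 1)))
      \<longlongrightarrow> sqrt (4 * ((r x)\<^sup>2 - 1) * (1\<^sup>2 - 1))) (at 0)"
    by (intro tendsto_intros assms)
  ultimately have "((\<lambda>h. \<bar>D h\<bar>) \<longlongrightarrow> 0) (at 0)"
    by simp
  then have "(D \<longlongrightarrow> 0) (at 0)"
    by (rule tendsto_rabs_zero_cancel)
  with S have "((\<lambda>h. (S h + D h) / 2) \<longlongrightarrow> (2 * r x + 0) / 2) (at 0)"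
    by (intro tendsto_intros) auto
  then show "((\<lambda>h. r (x + h)) \<longlongrightarrow> r x) (at 0)"
    by (simp add: S_def D_def)
qed

lemma cluster_value_less_1:
  assumes "\<not> (r \<longlongrightarrow> 1) (at 0)"
  obtains y where "y \<in> cluster_values" "y < 1"
proof -
  obtain e where "e > 0" and e: "\<And>d. d > 0 \<Longrightarrow> \<exists>x. x \<noteq> 0 \<and> \<bar>x\<bar> < d \<and> \<not> \<bar>r x - 1\<bar> < e"
    using assms unfolding LIM_eq by (auto simp: real_norm_def)
  have "\<exists>x. \<bar>x\<bar> < 1 / Suc j \<and> r x \<le> 1 - e" for j
  proof -
    obtain x where "\<bar>x\<bar> < 1 / Suc j" "\<not> \<bar>r x - 1\<bar> < e"
      using e[of "1 / Suc j"] by auto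
    moreover have "r x \<le> 1"
      using bounded[of x] by linarith
    ultimately show ?thesis
      by (intro exI[of _ x]) linarith
  qed
  then obtain t where t: "\<And>j. \<bar>t j\<bar> < 1 / Suc j" "\<And>j. r (t j) \<le> 1 - e"
    by metis
  obtain y \<sigma> where \<sigma>: "strict_mono \<sigma>" "((\<lambda>j. r (t j)) \<circ> \<sigma>) \<longlonglongrightarrow> y"
    using bounded_imp_convergent_subsequence[OF bounded_range_comp[of t]] by blast
  have "t \<longlonglongrightarrow> 0"
    by (rule LIMSEQ_norm_0) (use t in auto)
  then have "y \<in> cluster_values"
    using cluster_valuesI[OF LIMSEQ_subseq_LIMSEQ[OF _ \<sigma>(1)]] \<sigma>(2) by (simp add: o_def)
  moreover have "y \<le> 1 - e"
    using \<sigma>(2) t(2) by (intro LIMSEQ_le_const2[of _ y]) (auto simp: o_def)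
  ultimately show ?thesis
    using that \<open>e > 0\<close> by simp
qed

lemma sequence_tendsto_minus_1:
  assumes "\<not> (r \<longlongrightarrow> 1) (at 0)"
  obtains t where "filterlim t (at 0) sequentially" "(\<lambda>j. r (t j)) \<longlonglongrightarrow> -1"
proof -
  obtain y where "y \<in> cluster_values" "y < 1"
    using cluster_value_less_1[OF assms] .
  then have "arccos y \<in> cluster_angles" "cos (arccos y) \<noteq> 1"
    by (simp_all add: cluster_angles_def cos_arccos_cluster_value)
  then have "-1 \<in> cluster_values"
    using pi_cluster_angle by (simp add: cluster_angles_def)
  then obtain t where t: "t \<longlonglongrightarrow> 0" "(\<lambda>j. r (t j)) \<longlonglongrightarrow> -1"
    by (rule cluster_valuesE)
  have "eventually (\<lambda>j. r (t j) < 0) sequentially"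
    using order_tendstoD(2)[OF t(2)] by simp
  then have "eventually (\<lambda>j. t j \<noteq> 0) sequentially"
    by eventually_elim auto
  with t have "filterlim t (at 0) sequentially"
    by (intro filterlim_atI) auto
  with t(2) show ?thesis
    using that by blast
qed

end

lemma bounded_real_cosine_Re:
  assumes "cosine_function c" "bounded (range c)"
  shows "bounded_real_cosine (\<lambda>t. Re (c t))"
proof
  have Im: "Im (c x) = 0" for x
    using bounded_cosine_function_real(1)[OF assms, of x] by (metis Im_complex_of_real)
  fix s t
  have "c 0 = 1" "c (s + t) + c (s - t) = 2 * c s * c t"
    using assms(1) unfolding cosine_function_def by blast+
  then have "Re (c 0) = 1" "Re (c (s + t) + c (s - t)) = Re (2 * c s * c t)"
    by simp_all
  then show "Re (c 0) = 1" "Re (c (s + t)) + Re (c (s - t)) = 2 * Re (c s) * Re (c t)"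
    using Im by simp_all
  show "\<bar>Re (c t)\<bar> \<le> 1"
    by (rule bounded_cosine_function_real(2)[OF assms])
qed

theorem corollary3p2:
  fixes a :: real and c :: "real \<Rightarrow> complex"
  assumes "cosine_function c"
    and "bounded (range c)"
    and "\<not> continuous_on UNIV c"
  shows "(SUP t. cmod (complex_of_real (cos (a * t)) - c t)) = 2 \<and>
         Limsup (at (0::real)) (\<lambda>t. ereal (cmod (complex_of_real (cos (a * t)) - c t))) = 2"
proof -
  define r where "r t = Re (c t)" for t
  interpret bounded_real_cosine r
    unfolding r_def using assms(1,2) by (rule bounded_real_cosine_Re)
  have c: "c = (\<lambda>t. complex_of_real (r t))"
    using bounded_cosine_function_real[OF assms(1,2)] by (auto simp: r_def)
  have "\<not> (r \<longlongrightarrow> 1) (at 0)"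
  proof
    assume "(r \<longlongrightarrow> 1) (at 0)"
    then have "isCont c x" for x
      unfolding c by (intro continuous_intros isCont_if_tendsto_1)
    with assms(3) show False
      by (simp add: continuous_at_imp_continuous_on)
  qed
  then obtain t where t: "filterlim t (at 0) sequentially" "(\<lambda>j. r (t j)) \<longlonglongrightarrow> -1"
    by (rule sequence_tendsto_minus_1)
  have dist: "cmod (complex_of_real (cos (a * x)) - c x) = \<bar>cos (a * x) - r x\<bar>" for x
    unfolding c by (simp flip: of_real_diff)
  have "\<bar>cos (a * x) - r x\<bar> \<le> 2" for x
    using bounded[of x] abs_cos_le_one[of "a * x"] by linarith
  moreover have "(\<lambda>j. \<bar>cos (a * t j) - r (t j)\<bar>) \<longlonglongrightarrow> \<bar>cos (a * 0) - (-1)\<bar>"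
    using t unfolding filterlim_at by (intro tendsto_intros) auto
  ultimately show ?thesis
    unfolding dist using SUP_Limsup_eq_attained_bound[OF _ t(1)] by simp
qed

end
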